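(* Let $n\ge1$. Averaged over all quasi-Stirling permutations of size $n$, the mean number of ascents is $(3n+1)/4$, the mean number of descents is $(3n+1)/4$, and the mean number of plateaus is $(n+1)/2$.
   Context: A quasi-Stirling permutation of size $n$ is a permutation $\pi_1\cdots\pi_{2n}$ of the multiset $\{1,1,2,2,\dots,n,n\}$ with no indices $i<j<k<\ell$ such that $\pi_i=\pi_k$ and $\pi_j=\pi_\ell$. For a sequence $\pi_1\cdots\pi_r$: $i\in\{1,\dots,r\}$ is a descent if $\pi_i>\pi_{i+1}$ or $i=r$; $i\in\{0,\dots,r-1\}$ is an ascent if $i=0$ or $\pi_i<\pi_{i+1}$; $i\in\{1,\dots,r-1\}$ is a plateau if $\pi_i=\pi_{i+1}$. *)

theory Defs
  imports Complex_Main "HOL-Library.Multiset"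
begin

text \<open>Sequences are lists; the informal 1-based entry pi_i is xs ! (i - 1).\<close>

definition quasi_stirling :: "nat \<Rightarrow> nat list \<Rightarrow> bool" where
  "quasi_stirling n xs \<longleftrightarrow>
     mset xs = mset ([1..<n+1] @ [1..<n+1]) \<and>
     \<not> (\<exists>i j k l. i < j \<and> j < k \<and> k < l \<and> l < length xs \<and>
            xs ! i = xs ! k \<and> xs ! j = xs ! l)"

definition QS :: "nat \<Rightarrow> nat list set" where
  "QS n = {xs. quasi_stirling n xs}"

definition des :: "nat list \<Rightarrow> nat" where
  "des xs = card {i \<in> {1..length xs}.
      i = length xs \<or> xs ! (i - 1) > xs ! i}"

definition asc :: "nat list \<Rightarrow> nat" where
  "asc xs = card {i \<in> {0..<length xs}.
      i = 0 \<or> xs ! (i - 1) < xs ! i}"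

definition plat :: "nat list \<Rightarrow> nat" where
  "plat xs = card {i \<in> {1..<length xs}. xs ! (i - 1) = xs ! i}"

end

theory Submission
  imports Defs
begin

text \<open>Ascents, descents and plateaus all count adjacent pairs (ascents and descents with one extra
  boundary position each), so asc + des + plat = 2n + 1 on every quasi-Stirling permutation of
  size n; reversal preserves quasi-Stirling permutations and exchanges ascents with descents, so
  both have the same total. It remains to show that plateaus have mean (n + 1)/2. A nonempty
  quasi-Stirling permutation on an alphabet S factors uniquely as a u a v, where u and v are
  quasi-Stirling permutations on complementary subsets A and (S - {a}) - A (first return of the
  first letter), and its plateaus are those of u and v plus one more when u is empty. Induction on
  |S| along this decomposition shows that 2 plat + [xs = []] has mean |S| + 1: the correction
  terms [u = []] and [v = []] cancel after summing over all A, by the symmetry between A and its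
  complement.\<close>

fun count_adjacent :: "('a \<Rightarrow> 'a \<Rightarrow> bool) \<Rightarrow> 'a list \<Rightarrow> nat" where
  "count_adjacent P (x # y # zs) = of_bool (P x y) + count_adjacent P (y # zs)"
| "count_adjacent P _ = 0"

lemma count_adjacent_Cons:
  "count_adjacent P (x # xs) = of_bool (xs \<noteq> [] \<and> P x (hd xs)) + count_adjacent P xs"
  by (cases xs) auto

lemma count_adjacent_append:
  "count_adjacent P (xs @ ys) = count_adjacent P xs + count_adjacent P ys
     + of_bool (xs \<noteq> [] \<and> ys \<noteq> [] \<and> P (last xs) (hd ys))"
  by (induction xs) (auto simp: count_adjacent_Cons)

lemma count_adjacent_rev: "count_adjacent P (rev xs) = count_adjacent (\<lambda>x y. P y x) xs"
  by (induction xs) (auto simp: count_adjacent_append count_adjacent_Cons hd_rev last_rev)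

lemma count_adjacent_trichotomy:
  fixes xs :: "'a :: linorder list"
  shows "count_adjacent (<) xs + count_adjacent (>) xs + count_adjacent (=) xs = length xs - 1"
  by (induction "(<) :: 'a \<Rightarrow> _" xs rule: count_adjacent.induct) auto

lemma card_adjacent_eq_count_adjacent:
  "card {i \<in> {1..<length xs}. P (xs ! (i - 1)) (xs ! i)} = count_adjacent P xs"
proof (induction P xs rule: count_adjacent.induct)
  case (1 P x y zs)
  define T where "T = {i \<in> {1..<length (y # zs)}. P ((y # zs) ! (i - 1)) ((y # zs) ! i)}"
  have "{i \<in> {1..<length (x # y # zs)}. P ((x # y # zs) ! (i - 1)) ((x # y # zs) ! i)}
      = (if P x y then insert 1 (Suc ` T) else Suc ` T)"
    (is "?L = ?R")
  proof (intro set_eqI iffI)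
    fix i assume "i \<in> ?L" then show "i \<in> ?R" by (cases i) (auto simp: T_def image_iff nth_Cons')
  qed (auto simp: T_def split: if_splits)
  moreover have "1 \<notin> Suc ` T" "finite T" by (auto simp: T_def)
  ultimately show ?case using "1.IH" by (simp add: T_def card_image)
qed auto

lemma plat_eq_count_adjacent: "plat xs = count_adjacent (=) xs"
  unfolding plat_def by (rule card_adjacent_eq_count_adjacent)

lemma asc_eq_count_adjacent: "xs \<noteq> [] \<Longrightarrow> asc xs = Suc (count_adjacent (<) xs)"
proof -
  assume "xs \<noteq> []"
  then have "{i \<in> {0..<length xs}. i = 0 \<or> xs ! (i - 1) < xs ! i}
      = insert 0 {i \<in> {1..<length xs}. xs ! (i - 1) < xs ! i}" by auto
  then show ?thesis unfolding asc_def using card_adjacent_eq_count_adjacent[of xs "(<)"] by simp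
qed

lemma des_eq_count_adjacent: "xs \<noteq> [] \<Longrightarrow> des xs = Suc (count_adjacent (>) xs)"
proof -
  assume "xs \<noteq> []"
  then have "{i \<in> {1..length xs}. i = length xs \<or> xs ! (i - 1) > xs ! i}
      = insert (length xs) {i \<in> {1..<length xs}. xs ! (i - 1) > xs ! i}"
    by (cases xs) auto
  then show ?thesis unfolding des_def using card_adjacent_eq_count_adjacent[of xs "(>)"] by simp
qed

lemma asc_add_des_add_plat: "xs \<noteq> [] \<Longrightarrow> asc xs + des xs + plat xs = length xs + 1"
  using count_adjacent_trichotomy[of xs]
  by (simp add: asc_eq_count_adjacent des_eq_count_adjacent plat_eq_count_adjacent)

lemma asc_rev: "asc (rev xs) = des xs"
proof (cases "xs = []")
  case False
  then show ?thesis
    by (simp add: asc_eq_count_adjacent des_eq_count_adjacent count_adjacent_rev)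
qed (simp add: asc_def des_def)

definition crossing :: "'a list \<Rightarrow> bool" where
  "crossing xs \<longleftrightarrow> (\<exists>i j k l. i < j \<and> j < k \<and> k < l \<and> l < length xs \<and>
                                xs ! i = xs ! k \<and> xs ! j = xs ! l)"

lemma crossing_append_left:
  assumes "crossing xs" shows "crossing (xs @ ys)"
proof -
  obtain i j k l where "i < j" "j < k" "k < l" "l < length xs" "xs ! i = xs ! k" "xs ! j = xs ! l"
    using assms unfolding crossing_def by blast
  then show ?thesis unfolding crossing_def
    by (intro exI[of _ i] exI[of _ j] exI[of _ k] exI[of _ l]) (simp add: nth_append)
qed

lemma crossing_append_right:
  assumes "crossing ys" shows "crossing (xs @ ys)"
proof -
  obtain i j k l where "i < j" "j < k" "k < l" "l < length ys" "ys ! i = ys ! k" "ys ! j = ys ! l"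
    using assms unfolding crossing_def by blast
  then show ?thesis unfolding crossing_def
    by (intro exI[of _ "length xs + i"] exI[of _ "length xs + j"] exI[of _ "length xs + k"]
        exI[of _ "length xs + l"]) (simp add: nth_append)
qed

lemma crossing_rev [simp]: "crossing (rev xs) \<longleftrightarrow> crossing xs"
proof -
  have "crossing (rev ys)" if ys: "crossing ys" for ys :: "'a list"
  proof -
    obtain i j k l where "i < j" "j < k" "k < l" "l < length ys" "ys ! i = ys ! k" "ys ! j = ys ! l"
      using ys unfolding crossing_def by blast
    moreover have "rev ys ! (length ys - 1 - t) = ys ! t" if "t < length ys" for t
      using that by (simp add: rev_nth Suc_diff_Suc)
    ultimately show ?thesis unfolding crossing_def
      by (intro exI[of _ "length ys - 1 - l"] exI[of _ "length ys - 1 - k"]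
          exI[of _ "length ys - 1 - j"] exI[of _ "length ys - 1 - i"]) auto
  qed
  from this[of xs] this[of "rev xs"] show ?thesis by auto
qed

lemma crossing_ConsD:
  assumes "crossing (x # xs)" "x \<notin> set (butlast xs)"
  shows "crossing xs"
proof -
  obtain i j k l where ijkl: "i < j" "j < k" "k < l" "l \<le> length xs"
    and eq: "(x # xs) ! i = (x # xs) ! k" "(x # xs) ! j = (x # xs) ! l"
    using assms(1) unfolding crossing_def by auto
  have "i \<noteq> 0"
  proof
    assume "i = 0"
    then have "x = butlast xs ! (k - 1)" using eq ijkl by (simp add: nth_butlast)
    moreover have "k - 1 < length (butlast xs)" using ijkl by simp
    ultimately show False using assms(2) nth_mem by metis
  qed
  then have "i - 1 < j - 1 \<and> j - 1 < k - 1 \<and> k - 1 < l - 1 \<and> l - 1 < length xs \<and>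
      xs ! (i - 1) = xs ! (k - 1) \<and> xs ! (j - 1) = xs ! (l - 1)"
    using ijkl eq by (auto simp: nth_Cons')
  then show ?thesis unfolding crossing_def by blast
qed

lemma crossing_append_disjoint:
  assumes "crossing (xs @ ys)" "set xs \<inter> set ys = {}"
  shows "crossing xs \<or> crossing ys"
proof -
  obtain i j k l where ijkl: "i < j" "j < k" "k < l" "l < length (xs @ ys)"
    and eq: "(xs @ ys) ! i = (xs @ ys) ! k" "(xs @ ys) ! j = (xs @ ys) ! l"
    using assms(1) unfolding crossing_def by blast
  have nth_xs: "(xs @ ys) ! t \<in> set xs" if "t < length xs" for t
    using that by (simp add: nth_append)
  have nth_ys: "(xs @ ys) ! t \<in> set ys" if "length xs \<le> t" "t < length (xs @ ys)" for t
    using that by (simp add: nth_append)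
  consider "l < length xs" | "length xs \<le> i" | "i < length xs" "length xs \<le> l" by linarith
  then show ?thesis
  proof cases
    case 1
    with ijkl eq have "crossing xs" unfolding crossing_def
      by (intro exI[of _ i] exI[of _ j] exI[of _ k] exI[of _ l]) (simp add: nth_append)
    then show ?thesis ..
  next
    case 2
    with ijkl eq have "crossing ys" unfolding crossing_def
      by (intro exI[of _ "i - length xs"] exI[of _ "j - length xs"] exI[of _ "k - length xs"]
          exI[of _ "l - length xs"]) (auto simp: nth_append)
    then show ?thesis ..
  next
    case 3
    \<comment> \<open>one of the two matched pairs straddles the cut, which disjointness forbids\<close>
    then have "(xs @ ys) ! i \<in> set xs \<and> (xs @ ys) ! k \<in> set ys
             \<or> (xs @ ys) ! j \<in> set xs \<and> (xs @ ys) ! l \<in> set ys"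
      using ijkl nth_xs nth_ys by (cases "k < length xs") auto
    then show ?thesis using eq assms(2) by auto
  qed
qed

lemma crossing_first_return_iff:
  assumes "a \<notin> set u" "a \<notin> set v" "set u \<inter> set v = {}"
  shows "crossing (a # u @ a # v) \<longleftrightarrow> crossing u \<or> crossing v"
proof
  assume "crossing (a # u @ a # v)"
  then have "crossing ((a # u @ [a]) @ v)" by simp
  then have "crossing (a # u @ [a]) \<or> crossing v"
    by (rule crossing_append_disjoint) (use assms in auto)
  moreover have "crossing u" if "crossing (a # u @ [a])"
  proof -
    have "crossing (u @ [a])" using that assms(1) by (auto intro: crossing_ConsD)
    then have "crossing (a # rev u)" by (metis crossing_rev rev_eq_Cons_iff rev_rev_ident rev_singleton_conv)
    moreover have "a \<notin> set (butlast (rev u))" using assms(1) by (metis in_set_butlastD set_rev)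
    ultimately have "crossing (rev u)" by (rule crossing_ConsD)
    then show ?thesis by simp
  qed
  ultimately show "crossing u \<or> crossing v" by blast
next
  assume "crossing u \<or> crossing v"
  then show "crossing (a # u @ a # v)"
    using crossing_append_left[of "[a] @ u" "a # v"] crossing_append_right[of v "a # u @ [a]"]
      crossing_append_right[of u "[a]"] by auto
qed

lemma crossing_if_shared:
  assumes "y \<in> set u" "y \<in> set v"
  shows "crossing (a # u @ a # v)"
proof -
  obtain j l where "j < length u" "u ! j = y" "l < length v" "v ! l = y"
    using assms by (meson in_set_conv_nth)
  then show ?thesis unfolding crossing_def
    by (intro exI[of _ 0] exI[of _ "Suc j"] exI[of _ "Suc (length u)"]
        exI[of _ "length u + 2 + l"]) (simp add: nth_append)
qed

definition QS_on :: "'a set \<Rightarrow> 'a list set" where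
  "QS_on S = {xs. mset xs = mset_set S + mset_set S \<and> \<not> crossing xs}"

lemma QS_eq_QS_on: "QS n = QS_on {1..n}"
proof -
  have "mset [1..<n+1] = mset_set {1..n}"
    by (metis mset_upt atLeastLessThanSuc_atLeastAtMost Suc_eq_plus1)
  then have "mset ([1..<n+1] @ [1..<n+1]) = mset_set {1..n} + mset_set {1..n}"
    by (simp only: mset_append)
  then show ?thesis unfolding QS_def QS_on_def quasi_stirling_def crossing_def by simp
qed

lemma mset_eq_doubled_mset_set_iff:
  assumes "finite S"
  shows "mset xs = mset_set S + mset_set S \<longleftrightarrow> set xs = S \<and> (\<forall>y\<in>S. count (mset xs) y = 2)"
proof
  assume "mset xs = mset_set S + mset_set S"
  then have count: "count (mset xs) y = (if y \<in> S then 2 else 0)" for y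
    using assms by (simp add: count_mset_set)
  have "y \<in> set xs \<longleftrightarrow> y \<in> S" for y
    using count[of y] count_mset_0_iff[of xs y] by (auto split: if_splits)
  then show "set xs = S \<and> (\<forall>y\<in>S. count (mset xs) y = 2)"
    using count by auto
next
  assume "set xs = S \<and> (\<forall>y\<in>S. count (mset xs) y = 2)"
  then have "count (mset xs) y = (if y \<in> S then 2 else 0)" for y
    by (auto simp: count_mset_0_iff)
  then show "mset xs = mset_set S + mset_set S"
    using assms by (simp add: multiset_eq_iff count_mset_set)
qed

lemma set_QS_on: "finite S \<Longrightarrow> xs \<in> QS_on S \<Longrightarrow> set xs = S"
  by (simp add: QS_on_def mset_eq_doubled_mset_set_iff)

lemma length_QS_on:
  assumes "xs \<in> QS_on S" shows "length xs = 2 * card S"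
proof -
  have "length xs = size (mset xs)" by simp
  also have "\<dots> = 2 * card S" using assms by (simp add: QS_on_def)
  finally show ?thesis .
qed

lemma finite_QS_on: "finite S \<Longrightarrow> finite (QS_on S)"
  using finite_lists_length_eq[of S "2 * card S"]
  by (rule finite_subset[rotated]) (auto dest: set_QS_on length_QS_on)

lemma QS_on_empty [simp]: "QS_on {} = {[]}"
  unfolding QS_on_def crossing_def by auto

lemma Nil_in_QS_on_iff: "finite S \<Longrightarrow> xs \<in> QS_on S \<Longrightarrow> xs = [] \<longleftrightarrow> S = {}"
  using set_QS_on by fastforce

lemma rev_in_QS_on: "xs \<in> QS_on S \<Longrightarrow> rev xs \<in> QS_on S"
  by (simp add: QS_on_def)

lemma count_first_return_eq_2_iff:
  assumes "a \<notin> set u" "a \<notin> set v" "set u \<inter> set v = {}"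
  shows "(\<forall>y\<in>set (a # u @ a # v). count (mset (a # u @ a # v)) y = 2)
     \<longleftrightarrow> (\<forall>y\<in>set u. count (mset u) y = 2) \<and> (\<forall>y\<in>set v. count (mset v) y = 2)"
proof -
  have "count (mset (a # u @ a # v)) a = 2" using assms(1,2) by (simp add: count_mset_0_iff)
  moreover have "count (mset (a # u @ a # v)) y = count (mset u) y" if "y \<in> set u" for y
    using that assms by (auto simp: count_mset_0_iff)
  moreover have "count (mset (a # u @ a # v)) y = count (mset v) y" if "y \<in> set v" for y
    using that assms by (auto simp: count_mset_0_iff)
  moreover have "set (a # u @ a # v) = insert a (set u \<union> set v)" by auto
  ultimately show ?thesis by (metis (no_types, lifting) Un_iff insert_iff)
qed

lemma first_return_in_QS_on:
  assumes S: "finite S" and a: "a \<in> S" and A: "A \<subseteq> S - {a}"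
    and u: "u \<in> QS_on A" and v: "v \<in> QS_on (S - {a} - A)"
  shows "a # u @ a # v \<in> QS_on S"
proof -
  have "finite A" "finite (S - {a} - A)" using S A finite_subset by auto
  then have u': "set u = A" "\<forall>y\<in>set u. count (mset u) y = 2" "\<not> crossing u"
    and v': "set v = S - {a} - A" "\<forall>y\<in>set v. count (mset v) y = 2" "\<not> crossing v"
    using u v by (auto simp: QS_on_def mset_eq_doubled_mset_set_iff)
  then have disj: "a \<notin> set u" "a \<notin> set v" "set u \<inter> set v = {}" using A by auto
  have "set (a # u @ a # v) = S" using u'(1) v'(1) a A by auto
  moreover have "\<forall>y\<in>set (a # u @ a # v). count (mset (a # u @ a # v)) y = 2"
    using count_first_return_eq_2_iff[OF disj] u'(2) v'(2) by blast
  moreover have "\<not> crossing (a # u @ a # v)"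
    using crossing_first_return_iff[OF disj] u'(3) v'(3) by blast
  ultimately show ?thesis
    unfolding QS_on_def mem_Collect_eq mset_eq_doubled_mset_set_iff[OF S] by metis
qed

lemma QS_on_first_returnE:
  assumes S: "finite S" and xs: "xs \<in> QS_on S" and ne: "S \<noteq> {}"
  obtains a u v where "a \<in> S" "set u \<subseteq> S - {a}" "u \<in> QS_on (set u)"
    "v \<in> QS_on (S - {a} - set u)" "xs = a # u @ a # v"
proof -
  have set_xs: "set xs = S" and count_xs: "\<forall>y\<in>set xs. count (mset xs) y = 2"
    and nc: "\<not> crossing xs"
    using xs S by (auto simp: QS_on_def mset_eq_doubled_mset_set_iff)
  obtain a t where xs_t: "xs = a # t" using set_xs ne by (cases xs) auto
  then have count_t: "count (mset t) a = 1" using count_xs by force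
  then obtain u v where t: "t = u @ a # v" and au: "a \<notin> set u"
    by (metis count_mset_0_iff one_neq_zero split_list_first)
  have av: "a \<notin> set v" using count_t t au by (simp add: count_mset_0_iff)
  have disj: "set u \<inter> set v = {}" using nc crossing_if_shared[of _ u v a] xs_t t by auto
  have "\<not> crossing u" "\<not> crossing v"
    using nc crossing_first_return_iff[OF au av disj] xs_t t by auto
  moreover have "\<forall>y\<in>set u. count (mset u) y = 2" "\<forall>y\<in>set v. count (mset v) y = 2"
    using count_xs count_first_return_eq_2_iff[OF au av disj] xs_t t by auto
  ultimately have "u \<in> QS_on (set u)" "v \<in> QS_on (set v)"
    by (auto simp: QS_on_def mset_eq_doubled_mset_set_iff)
  moreover have "set v = S - {a} - set u" "set u \<subseteq> S - {a}"
    using set_xs xs_t t au av disj by auto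
  moreover have "a \<in> S" using set_xs xs_t by auto
  ultimately show thesis using that xs_t t by simp
qed

lemma QS_on_nonempty: "finite S \<Longrightarrow> QS_on S \<noteq> {}"
proof (induction S rule: finite_induct)
  case (insert a S)
  then obtain v where "v \<in> QS_on S" by blast
  moreover have "insert a S - {a} - {} = S" using insert by auto
  ultimately have "a # [] @ a # v \<in> QS_on (insert a S)"
    using insert first_return_in_QS_on[of "insert a S" a "{}" "[]" v] by simp
  then show ?case by blast
qed simp

lemma bij_betw_first_return:
  assumes S: "finite S" and ne: "S \<noteq> {}"
  shows "bij_betw (\<lambda>(a, A, u, v). a # u @ a # v)
           (SIGMA a:S. SIGMA A:Pow (S - {a}). QS_on A \<times> QS_on (S - {a} - A)) (QS_on S)"
    (is "bij_betw ?f ?I _")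
proof (rule bij_betw_imageI)
  have set_uv: "set u = A" "a \<notin> set u" "a \<notin> set v" if "(a, A, u, v) \<in> ?I" for a A u v
    using that S set_QS_on[of A u] set_QS_on[of "S - {a} - A" v] finite_subset by auto
  have "x = y" if x: "x \<in> ?I" and y: "y \<in> ?I" and eq: "?f x = ?f y" for x y
  proof -
    obtain a A u v a' A' u' v' where xy: "x = (a, A, u, v)" "y = (a', A', u', v')"
      by (cases x, cases y) auto
    have "a' = a" using eq xy by simp
    then have "u @ a # v = u' @ a # v'" using eq xy by simp
    moreover have "a \<notin> set u" "a \<notin> set v" using set_uv(2,3)[of a A u v] x xy by simp_all
    ultimately have "u = u'" "v = v'" by (simp_all add: append_Cons_eq_iff)
    moreover have "A = set u" "A' = set u'" using set_uv(1) x y xy by simp_all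
    ultimately show ?thesis using xy \<open>a' = a\<close> by simp
  qed
  then show "inj_on ?f ?I" by (rule inj_onI)
  show "?f ` ?I = QS_on S"
  proof
    show "QS_on S \<subseteq> ?f ` ?I"
    proof
      fix xs assume "xs \<in> QS_on S"
      then obtain a u v where "a \<in> S" "set u \<subseteq> S - {a}" "u \<in> QS_on (set u)"
        "v \<in> QS_on (S - {a} - set u)" "xs = a # u @ a # v"
        using QS_on_first_returnE[OF S _ ne] by blast
      then show "xs \<in> ?f ` ?I" by (intro image_eqI[of _ _ "(a, set u, u, v)"]) auto
    qed
  qed (use S first_return_in_QS_on in auto)
qed

lemma sum_QS_on_first_return:
  assumes S: "finite S" and ne: "S \<noteq> {}"
  shows "(\<Sum>xs\<in>QS_on S. f xs)
       = (\<Sum>a\<in>S. \<Sum>A\<in>Pow (S - {a}). \<Sum>u\<in>QS_on A. \<Sum>v\<in>QS_on (S - {a} - A). f (a # u @ a # v))"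
proof -
  define F where "F a (A :: 'a set) u v = f (a # u @ a # v)" for a A u v
  have fin: "finite (QS_on A)" if "A \<subseteq> S" for A
    using that S finite_QS_on finite_subset by blast
  have "(\<Sum>xs\<in>QS_on S. f xs)
      = (\<Sum>(a, A, u, v)\<in>(SIGMA a:S. SIGMA A:Pow (S - {a}). QS_on A \<times> QS_on (S - {a} - A)). F a A u v)"
    using sum.reindex_bij_betw[OF bij_betw_first_return[OF S ne], of f]
    by (simp add: case_prod_beta' F_def)
  also have "\<dots> = (\<Sum>a\<in>S. \<Sum>(A, u, v)\<in>(SIGMA A:Pow (S - {a}). QS_on A \<times> QS_on (S - {a} - A)).
           F a A u v)"
    using S by (subst sum.Sigma) (auto intro!: finite_SigmaI fin)
  also have "\<dots> = (\<Sum>a\<in>S. \<Sum>A\<in>Pow (S - {a}). \<Sum>(u, v)\<in>QS_on A \<times> QS_on (S - {a} - A). F a A u v)"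
    by (rule sum.cong[OF refl], rule sum.Sigma[symmetric]) (use S in \<open>auto intro!: fin\<close>)
  finally show ?thesis by (simp only: F_def sum.cartesian_product)
qed

lemma count_adjacent_eq_first_return:
  assumes "a \<notin> set u" "a \<notin> set v"
  shows "count_adjacent (=) (a # u @ a # v)
       = count_adjacent (=) u + count_adjacent (=) v + of_bool (u = [])"
proof -
  have "count_adjacent (=) (a # w) = count_adjacent (=) w" if "a \<notin> set w" for w
    using that by (cases w) auto
  moreover have "last (a # u) = a \<longleftrightarrow> u = []"
    using assms(1) by (cases u rule: rev_cases) auto
  ultimately show ?thesis
    using assms count_adjacent_append[of "(=)" "a # u" "a # v"] by simp
qed

text \<open>The term for the empty word makes the mean |S| + 1 correct also for S = {}, which the
  induction needs.\<close>
definition plateau_weight :: "'a list \<Rightarrow> nat" where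
  "plateau_weight xs = 2 * count_adjacent (=) xs + of_bool (xs = [])"

lemma plateau_weight_first_return:
  assumes "a \<notin> set u" "a \<notin> set v"
  shows "plateau_weight (a # u @ a # v) + of_bool (v = [])
       = plateau_weight u + plateau_weight v + of_bool (u = [])"
  using count_adjacent_eq_first_return[OF assms] by (simp add: plateau_weight_def)

lemma sum_Nil_indicator_QS_on:
  assumes "finite S" shows "(\<Sum>xs\<in>QS_on S. of_bool (xs = []) :: nat) = of_bool (S = {})"
  using Nil_in_QS_on_iff[OF assms] by (cases "S = {}") auto

lemma sum_plateau_weight_first_return:
  assumes A: "finite A" and B: "finite B" and a: "a \<notin> A" "a \<notin> B"
  shows "(\<Sum>u\<in>QS_on A. \<Sum>v\<in>QS_on B. plateau_weight (a # u @ a # v)) + of_bool (B = {}) * card (QS_on A)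
       = (\<Sum>u\<in>QS_on A. plateau_weight u) * card (QS_on B)
         + card (QS_on A) * (\<Sum>v\<in>QS_on B. plateau_weight v) + of_bool (A = {}) * card (QS_on B)"
proof -
  have "(\<Sum>u\<in>QS_on A. \<Sum>v\<in>QS_on B. plateau_weight (a # u @ a # v)) + of_bool (B = {}) * card (QS_on A)
      = (\<Sum>u\<in>QS_on A. \<Sum>v\<in>QS_on B. plateau_weight (a # u @ a # v) + of_bool (v = []))"
    by (simp add: sum.distrib sum_Nil_indicator_QS_on[OF B] mult.commute)
  also have "\<dots> = (\<Sum>u\<in>QS_on A. \<Sum>v\<in>QS_on B. plateau_weight u + plateau_weight v + of_bool (u = []))"
    using a A B set_QS_on by (intro sum.cong refl plateau_weight_first_return) blast+
  also have "\<dots> = (\<Sum>u\<in>QS_on A. plateau_weight u) * card (QS_on B)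
         + card (QS_on A) * (\<Sum>v\<in>QS_on B. plateau_weight v)
         + (\<Sum>u\<in>QS_on A. of_bool (u = [])) * card (QS_on B)"
    by (simp add: sum.distrib sum_distrib_right sum_distrib_left mult.commute)
  finally show ?thesis by (simp only: sum_Nil_indicator_QS_on[OF A])
qed

lemma sum_Pow_swap_complement:
  assumes "finite T"
  shows "(\<Sum>A\<in>Pow T. h A (T - A)) = (\<Sum>A\<in>Pow T. h (T - A) A)"
proof -
  have "bij_betw (\<lambda>A. T - A) (Pow T) (Pow T)"
    by (rule bij_betw_byWitness[where f' = "\<lambda>A. T - A"]) auto
  from sum.reindex_bij_betw[OF this, of "\<lambda>A. h (T - A) A"] show ?thesis
    by (simp add: double_diff)
qed

lemma card_first_return_split:
  assumes "finite S" "a \<in> S" "A \<subseteq> S - {a}"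
  shows "card A + card (S - {a} - A) + 1 = card S"
proof -
  have "card (S - {a} - A) = card (S - {a}) - card A"
    using assms finite_subset by (intro card_Diff_subset) auto
  moreover have "card A \<le> card (S - {a})" using assms by (intro card_mono) auto
  moreover have "card (S - {a}) + 1 = card S"
    using assms(1,2) card.remove by fastforce
  ultimately show ?thesis by linarith
qed

lemma sum_plateau_weight_first_return_Pow:
  assumes S: "finite S" and a: "a \<in> S"
    and IH: "\<And>A. A \<subseteq> S - {a} \<Longrightarrow> (\<Sum>xs\<in>QS_on A. plateau_weight xs) = (card A + 1) * card (QS_on A)"
  shows "(\<Sum>A\<in>Pow (S - {a}). \<Sum>u\<in>QS_on A. \<Sum>v\<in>QS_on (S - {a} - A). plateau_weight (a # u @ a # v))
       = (card S + 1) * (\<Sum>A\<in>Pow (S - {a}). card (QS_on A) * card (QS_on (S - {a} - A)))"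
    (is "?L = _")
proof -
  define T where "T = S - {a}"
  define c where "c A = card (QS_on A)" for A :: "'a set"
  have "(\<Sum>u\<in>QS_on A. \<Sum>v\<in>QS_on (T - A). plateau_weight (a # u @ a # v)) + of_bool (T - A = {}) * c A
      = (card S + 1) * (c A * c (T - A)) + of_bool (A = {}) * c (T - A)" if A: "A \<subseteq> T" for A
  proof -
    have fin: "finite A" "finite (T - A)" using A S finite_subset by (auto simp: T_def)
    have "(\<Sum>u\<in>QS_on A. \<Sum>v\<in>QS_on (T - A). plateau_weight (a # u @ a # v)) + of_bool (T - A = {}) * c A
        = (\<Sum>u\<in>QS_on A. plateau_weight u) * c (T - A)
          + c A * (\<Sum>v\<in>QS_on (T - A). plateau_weight v) + of_bool (A = {}) * c (T - A)"
      unfolding c_def using fin A by (intro sum_plateau_weight_first_return) (auto simp: T_def)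
    also have "\<dots> = (card A + 1 + (card (T - A) + 1)) * (c A * c (T - A)) + of_bool (A = {}) * c (T - A)"
      using A IH[of A] IH[of "T - A"] unfolding c_def T_def by (simp add: algebra_simps)
    moreover have "card S = card A + card (T - A) + 1"
      using card_first_return_split[OF S a] A by (simp add: T_def)
    ultimately show ?thesis by simp
  qed
  then have "?L + (\<Sum>A\<in>Pow T. of_bool (T - A = {}) * c A)
      = (\<Sum>A\<in>Pow T. (card S + 1) * (c A * c (T - A)) + of_bool (A = {}) * c (T - A))"
    unfolding T_def by (subst sum.distrib[symmetric]) (intro sum.cong refl, auto)
  \<comment> \<open>the correction terms cancel under A \<mapsto> T - A\<close>
  moreover have "(\<Sum>A\<in>Pow T. of_bool (T - A = {}) * c A) = (\<Sum>A\<in>Pow T. of_bool (A = {}) * c (T - A))"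
    using S sum_Pow_swap_complement[of T "\<lambda>X Y. of_bool (Y = {}) * c X"] by (simp add: T_def)
  ultimately show ?thesis by (simp add: sum.distrib sum_distrib_left c_def T_def)
qed

lemma card_QS_on_first_return:
  "finite S \<Longrightarrow> S \<noteq> {} \<Longrightarrow>
     card (QS_on S) = (\<Sum>a\<in>S. \<Sum>A\<in>Pow (S - {a}). card (QS_on A) * card (QS_on (S - {a} - A)))"
  using sum_QS_on_first_return[of S "\<lambda>_. 1 :: nat"] by simp

lemma sum_plateau_weight_QS_on:
  "finite S \<Longrightarrow> (\<Sum>xs\<in>QS_on S. plateau_weight xs) = (card S + 1) * card (QS_on S)"
proof (induction "card S" arbitrary: S rule: less_induct)
  case less
  show ?case
  proof (cases "S = {}")
    case False
    have IH: "(\<Sum>xs\<in>QS_on A. plateau_weight xs) = (card A + 1) * card (QS_on A)"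
      if "a \<in> S" "A \<subseteq> S - {a}" for a A
    proof (rule less.hyps)
      show "card A < card S" using card_first_return_split[OF less.prems that] by linarith
      show "finite A" using that less.prems finite_subset by blast
    qed
    have "(\<Sum>xs\<in>QS_on S. plateau_weight xs)
        = (\<Sum>a\<in>S. \<Sum>A\<in>Pow (S - {a}). \<Sum>u\<in>QS_on A. \<Sum>v\<in>QS_on (S - {a} - A).
             plateau_weight (a # u @ a # v))"
      by (rule sum_QS_on_first_return[OF less.prems False])
    also have "\<dots> = (card S + 1) * card (QS_on S)"
      using sum_plateau_weight_first_return_Pow[OF less.prems _ IH]
        card_QS_on_first_return[OF less.prems False]
      by (simp add: sum_distrib_left)
    finally show ?thesis .
  qed (simp add: plateau_weight_def)
qed

lemma sum_plateaus_QS_on: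
  assumes "finite S"
  shows "2 * (\<Sum>xs\<in>QS_on S. count_adjacent (=) xs) + of_bool (S = {}) = (card S + 1) * card (QS_on S)"
  using sum_plateau_weight_QS_on[OF assms] sum_Nil_indicator_QS_on[OF assms]
  by (simp add: plateau_weight_def sum.distrib sum_distrib_left)

lemma sum_asc_eq_sum_des_QS_on: "(\<Sum>xs\<in>QS_on S. asc xs) = (\<Sum>xs\<in>QS_on S. des xs)"
proof -
  have "bij_betw rev (QS_on S) (QS_on S)"
    by (rule bij_betw_byWitness[where f'=rev]) (auto simp: rev_in_QS_on)
  from sum.reindex_bij_betw[OF this, of asc] show ?thesis by (simp add: asc_rev)
qed

lemma sum_asc_des_plat_QS_on:
  assumes "finite S" "S \<noteq> {}"
  shows "(\<Sum>xs\<in>QS_on S. asc xs) + (\<Sum>xs\<in>QS_on S. des xs) + (\<Sum>xs\<in>QS_on S. plat xs)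
       = (2 * card S + 1) * card (QS_on S)"
proof -
  have "asc xs + des xs + plat xs = 2 * card S + 1" if "xs \<in> QS_on S" for xs
    using that assms Nil_in_QS_on_iff length_QS_on asc_add_des_add_plat by metis
  then show ?thesis by (simp add: sum.distrib[symmetric])
qed

theorem corollary3p1:
  fixes n :: nat
  assumes "n \<ge> 1"
  shows "(\<Sum>xs\<in>QS n. real (asc xs)) / real (card (QS n)) = (3 * real n + 1) / 4
       \<and> (\<Sum>xs\<in>QS n. real (des xs)) / real (card (QS n)) = (3 * real n + 1) / 4
       \<and> (\<Sum>xs\<in>QS n. real (plat xs)) / real (card (QS n)) = (real n + 1) / 2"
proof -
  have S: "finite {1..n}" "{1..n} \<noteq> {}" "card {1..n} = n" using assms by auto
  have "card (QS n) > 0"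
    unfolding QS_eq_QS_on using QS_on_nonempty[OF S(1)] finite_QS_on[OF S(1)] by (simp add: card_gt_0_iff)
  have plat: "2 * (\<Sum>xs\<in>QS n. plat xs) = (n + 1) * card (QS n)"
    using sum_plateaus_QS_on[OF S(1)] S by (simp add: QS_eq_QS_on plat_eq_count_adjacent)
  have asc_des: "(\<Sum>xs\<in>QS n. asc xs) = (\<Sum>xs\<in>QS n. des xs)"
    by (simp add: QS_eq_QS_on sum_asc_eq_sum_des_QS_on)
  have "(\<Sum>xs\<in>QS n. asc xs) + (\<Sum>xs\<in>QS n. des xs) + (\<Sum>xs\<in>QS n. plat xs)
      = (2 * n + 1) * card (QS n)"
    using sum_asc_des_plat_QS_on[OF S(1,2)] S(3) by (simp add: QS_eq_QS_on)
  with plat asc_des have des: "4 * (\<Sum>xs\<in>QS n. des xs) = (3 * n + 1) * card (QS n)"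
    by (simp add: algebra_simps)
  have "2 * real (\<Sum>xs\<in>QS n. plat xs) = (real n + 1) * real (card (QS n))"
    using arg_cong[OF plat, of real] by (simp only: of_nat_mult of_nat_add of_nat_numeral of_nat_1)
  moreover have "4 * real (\<Sum>xs\<in>QS n. des xs) = (3 * real n + 1) * real (card (QS n))"
    using arg_cong[OF des, of real] by (simp only: of_nat_mult of_nat_add of_nat_numeral of_nat_1)
  ultimately show ?thesis
    using \<open>card (QS n) > 0\<close> asc_des by (simp add: field_simps flip: of_nat_sum)
qed

end
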